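(* Let $l,m\in\mathbb{N}$ and let $q(x)=x^6-(l+m+3)x^4+(lm+l+m+3)x^2-1$. If $q(x)$ is reducible over $\mathbb{Q}$, then the set of all positive eigenvalues of the adjacency matrix of the double subdivided star $T_{l,m}$, with any one of them removed, is linearly independent over $\mathbb{Q}$.
   Context: A subdivided star $SK_{1,l}$ is obtained by identifying exactly one pendant (end) vertex from each of $l$ copies of the path $P_3$ on three vertices; the identified vertex is the coalescence vertex. The double subdivided star $T_{l,m}$ is obtained from $SK_{1,l}$ and $SK_{1,m}$ by adding one edge joining their two coalescence vertices. Eigenvalues are those of the adjacency matrix; the characteristic polynomial of $T_{l,m}$ is $(x^2-1)^{l+m-2}q(x)$. *)

theory Defs
  imports "Jordan_Normal_Form.Char_Poly" "HOL-Computational_Algebra.Polynomial_Factorial"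
begin

text \<open>Vertices of the double subdivided star T(l,m) are 0 ..< 2l+2m+2:
  vertex 0 is the coalescence vertex of SK(1,l), vertex 1 that of SK(1,m);
  for k < l the k-th P3 of SK(1,l) is 0 -- 2+2k -- 3+2k;
  for k < m the k-th P3 of SK(1,m) is 1 -- 2+2l+2k -- 3+2l+2k;
  the extra edge joins 0 and 1.\<close>

definition dss_edge :: "nat \<Rightarrow> nat \<Rightarrow> nat \<Rightarrow> nat \<Rightarrow> bool" where
  "dss_edge l m i j \<longleftrightarrow>
     (i = 0 \<and> j = 1)
   \<or> (\<exists>k<l. (i = 0 \<and> j = 2 + 2*k) \<or> (i = 2 + 2*k \<and> j = 3 + 2*k))
   \<or> (\<exists>k<m. (i = 1 \<and> j = 2 + 2*l + 2*k) \<or> (i = 2 + 2*l + 2*k \<and> j = 3 + 2*l + 2*k))"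

definition dss_adj :: "nat \<Rightarrow> nat \<Rightarrow> nat \<Rightarrow> nat \<Rightarrow> bool" where
  "dss_adj l m i j \<longleftrightarrow> dss_edge l m i j \<or> dss_edge l m j i"

definition dss_num_vertices :: "nat \<Rightarrow> nat \<Rightarrow> nat" where
  "dss_num_vertices l m = 2*l + 2*m + 2"

definition dss_adj_matrix :: "nat \<Rightarrow> nat \<Rightarrow> real mat" where
  "dss_adj_matrix l m = mat (dss_num_vertices l m) (dss_num_vertices l m)
     (\<lambda>(i, j). if dss_adj l m i j then 1 else 0)"

definition q_poly :: "nat \<Rightarrow> nat \<Rightarrow> rat poly" where
  "q_poly l m = [: -1, 0, of_nat (l*m + l + m + 3), 0, - of_nat (l + m + 3), 0, 1 :]"

definition Q_lin_indep :: "real set \<Rightarrow> bool" where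
  "Q_lin_indep S \<longleftrightarrow> (\<forall>T c. finite T \<longrightarrow> T \<subseteq> S \<longrightarrow>
      (\<Sum>x\<in>T. of_rat (c x) * x) = 0 \<longrightarrow> (\<forall>x\<in>T. c x = 0))"

end

theory Submission
  imports Defs "HOL-Computational_Algebra.Field_as_Ring"
begin

(*
  An eigenvector of T(l,m) for an eigenvalue x with x^2 \<noteq> 1 is determined along every pendant
  path by its value at the adjacent coalescence vertex, and the two equations at the coalescence
  vertices then force q(x) = 0.

  Write q(x) = r(x^2); the cubic r has no rational root and is therefore irreducible. If f is a
  factor of q of degree at most 3, then f(x) f(-x) = E(x^2) (Graeffe) with r dividing E, which
  forces q(x) = - G(x) G(-x) for a monic rational cubic G = x^3 + a x^2 + b x + c. Comparing
  coefficients shows that G has no rational root and that a \<noteq> 0.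

  Hence every positive eigenvalue other than 1 is, up to sign, one of the at most three roots of G.
  For distinct roots t1, t2 of G the numbers 1, t1, t2 are Q-independent, since a rational affine
  map sending one root of an irreducible cubic to another one is the identity; and all roots of G
  together are Q-independent since their sum is -a \<noteq> 0. After the sign changes, removing one
  eigenvalue leaves a subset of {1, t1, t2} or of the set of roots of G.
*)

interpretation of_rat_poly_hom: map_poly_inj_idom_hom of_rat ..

lemma irreducible_dvd_of_common_root:
  fixes z :: "'a::field_char_0"
  assumes "irreducible g"
    and "poly (map_poly of_rat g) z = 0" and "poly (map_poly of_rat h) z = 0"
  shows "g dvd h"
proof (rule ccontr)
  assume "\<not> g dvd h"
  with assms(1) have "gcd g h = 1"
    by (simp add: field_poly_irreducible_imp_prime prime_elem_imp_coprime)
  then have "fst (bezout_coefficients g h) * g + snd (bezout_coefficients g h) * h = 1"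
    by (simp add: bezout_coefficients_fst_snd)
  then have "poly (map_poly of_rat
      (fst (bezout_coefficients g h) * g + snd (bezout_coefficients g h) * h)) z = (1 :: 'a)"
    by simp
  with assms(2,3) show False
    by (simp add: hom_distribs)
qed

lemma irreducible_if_degree_le_3_no_root:
  fixes p :: "'a::field poly"
  assumes "0 < degree p" and "degree p \<le> 3" and no_root: "\<And>x. poly p x \<noteq> 0"
  shows "irreducible p"
proof -
  have "irreducible\<^sub>d p"
  proof (rule irreducible\<^sub>dI2)
    fix q :: "'a poly"
    assume "0 < degree q" and "degree q \<le> degree p div 2"
    with assms(2) have "degree q = 1"
      by linarith
    then obtain u v where q: "q = [:v, u:]" and "u \<noteq> 0"
      by (rule degree1_coeffs)
    then have "poly q (- v / u) = 0"
      by simp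
    then show "\<not> q dvd p"
      using no_root by (metis dvdE mult_eq_0_iff poly_mult)
  qed fact
  then show ?thesis
    by simp
qed

lemma exists_factor_of_half_degree:
  fixes p :: "'a::field poly"
  assumes "\<not> irreducible p" and "0 < degree p"
  obtains f where "f dvd p" and "0 < degree f" and "degree f \<le> degree p div 2"
  using assms irreducible\<^sub>dI2[of p] irreducible_connect_field[of p] by blast

lemma dvd_degree_le_imp_smult:
  fixes g h :: "'a::field poly"
  assumes "g dvd h" and "h \<noteq> 0" and "degree h \<le> degree g"
  obtains w where "h = Polynomial.smult w g"
proof -
  obtain k where h: "h = g * k"
    using assms(1) by (elim dvdE)
  with assms(2) have "g \<noteq> 0" and "k \<noteq> 0"
    by auto
  then have "degree h = degree g + degree k"
    by (simp add: h degree_mult_eq)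
  with assms(3) have "degree k = 0"
    by simp
  then obtain w where "k = [:w:]"
    by (elim degree_eq_zeroE)
  with h show ?thesis
    using that by simp
qed

lemma pCons_coeffs_if_degree_le_3:
  fixes f :: "'a::zero poly"
  assumes "degree f \<le> 3"
  shows "f = [:coeff f 0, coeff f 1, coeff f 2, coeff f 3:]"
proof (rule poly_eqI)
  fix n
  show "coeff f n = coeff [:coeff f 0, coeff f 1, coeff f 2, coeff f 3:] n"
    using assms
    by (auto simp: coeff_pCons coeff_eq_0 numeral_2_eq_2 numeral_3_eq_3 split: nat.split)
qed

definition graeffe3 :: "'a::comm_ring_1 poly \<Rightarrow> 'a poly" where
  "graeffe3 f = [:coeff f 0 ^ 2, 2 * coeff f 0 * coeff f 2 - coeff f 1 ^ 2,
     coeff f 2 ^ 2 - 2 * coeff f 1 * coeff f 3, - (coeff f 3 ^ 2):]"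

lemma poly_graeffe3:
  fixes f :: "'a::comm_ring_1 poly"
  assumes "degree f \<le> 3"
  shows "poly (graeffe3 f) (z^2) = poly f z * poly f (- z)"
  by (subst (2 3) pCons_coeffs_if_degree_le_3[OF assms])
    (simp add: graeffe3_def algebra_simps power2_eq_square power3_eq_cube)

lemma graeffe3_eq_0_iff:
  fixes f :: "'a::idom poly"
  assumes "degree f \<le> 3"
  shows "graeffe3 f = 0 \<longleftrightarrow> f = 0"
proof
  assume "graeffe3 f = 0"
  then have "coeff f 0 = 0" and "coeff f 3 = 0"
    by (simp_all add: graeffe3_def)
  moreover from \<open>graeffe3 f = 0\<close> \<open>coeff f 0 = 0\<close> \<open>coeff f 3 = 0\<close>
  have "coeff f 1 = 0" and "coeff f 2 = 0"
    by (simp_all add: graeffe3_def)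
  ultimately show "f = 0"
    by (subst pCons_coeffs_if_degree_le_3[OF assms]) simp
qed (simp add: graeffe3_def)

lemma graeffe3_eq_smult_cubic_coeffs:
  fixes f :: "'a::field poly"
  assumes "degree f \<le> 3" and "f \<noteq> 0" and "graeffe3 f = Polynomial.smult w [:-1, A, -B, 1:]"
  obtains a b c where "c^2 = 1" and "2*a*c - b^2 = - A" and "a^2 - 2*b = B"
proof -
  define f0 f1 f2 f3
    where "f0 = coeff f 0" and "f1 = coeff f 1" and "f2 = coeff f 2" and "f3 = coeff f 3"
  have coeffs: "coeff (graeffe3 f) n = w * coeff [:-1, A, -B, 1:] n" for n
    by (simp only: assms(3) coeff_smult)
  have c0: "f0^2 = - w" and c1: "2*f0*f2 - f1^2 = w * A" and c2: "f2^2 - 2*f1*f3 = - w * B"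
    and "- (f3^2) = w"
    using coeffs[of 0] coeffs[of 1] coeffs[of 2] coeffs[of 3]
    by (simp_all add: graeffe3_def f0_def f1_def f2_def f3_def eval_nat_numeral)
  then have c3: "f3^2 = - w"
    by (metis minus_minus)
  have "f3 \<noteq> 0"
  proof
    assume "f3 = 0"
    with c3 assms(3) have "graeffe3 f = 0"
      by simp
    with assms(1,2) show False
      by (simp add: graeffe3_eq_0_iff)
  qed
  with c3 have "w \<noteq> 0"
    by auto
  show ?thesis
  proof (rule that[of "f0 / f3"])
    from c0 c3 have "f0^2 = f3^2"
      by simp
    with \<open>f3 \<noteq> 0\<close> show "(f0 / f3)^2 = 1"
      by (simp add: power_divide)
    have "2 * (f2 / f3) * (f0 / f3) - (f1 / f3)^2 = (2*f0*f2 - f1^2) / f3^2"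
      using \<open>f3 \<noteq> 0\<close> by (simp add: field_simps power2_eq_square)
    also have "\<dots> = - A"
      using c1 c3 \<open>w \<noteq> 0\<close> by simp
    finally show "2 * (f2 / f3) * (f0 / f3) - (f1 / f3)^2 = - A" .
    have "(f2 / f3)^2 - 2 * (f1 / f3) = (f2^2 - 2*f1*f3) / f3^2"
      using \<open>f3 \<noteq> 0\<close> by (simp add: field_simps power2_eq_square)
    also have "\<dots> = B"
      using c2 c3 \<open>w \<noteq> 0\<close> by simp
    finally show "(f2 / f3)^2 - 2 * (f1 / f3) = B" .
  qed
qed

lemma rat_root_monic_int_cubic:
  fixes y :: rat and A B :: int
  assumes "y^3 + of_int B * y^2 + of_int A * y - 1 = 0"
  shows "y = 1 \<or> y = -1"
proof -
  obtain n d where nd: "quotient_of y = (n, d)"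
    by fastforce
  have "d > 0" and "coprime n d" and y: "y = of_int n / of_int d"
    using nd quotient_of_denom_pos quotient_of_coprime quotient_of_div by blast+
  have "of_int (n^3 + B * n^2 * d + A * n * d^2 - d^3)
      = (of_int d)^3 * (y^3 + of_int B * y^2 + of_int A * y - 1 :: rat)"
    using \<open>d > 0\<close> by (simp add: y field_simps power3_eq_cube power2_eq_square)
  with assms have "of_int (n^3 + B * n^2 * d + A * n * d^2 - d^3) = (0 :: rat)"
    by simp
  then have eq: "n^3 + B * n^2 * d + A * n * d^2 - d^3 = 0"
    by (simp only: of_int_eq_0_iff)
  then have "n^3 = d * (d^2 - B * n^2 - A * n * d)"
    by (simp add: algebra_simps power2_eq_square power3_eq_cube)
  then have "d dvd n^3"
    by simp
  moreover have "coprime d (n^3)"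
    using \<open>coprime n d\<close> by (simp add: coprime_commute)
  ultimately have "d dvd 1"
    by (meson coprime_common_divisor dvd_refl)
  with \<open>d > 0\<close> have "d = 1"
    by simp
  with eq have "n^3 + B * n^2 + A * n = 1"
    by simp
  moreover have "n * (n^2 + B * n + A) = n^3 + B * n^2 + A * n"
    by (simp add: algebra_simps power2_eq_square power3_eq_cube)
  ultimately have "n * (n^2 + B * n + A) = 1"
    by linarith
  then have "n = 1 \<or> n = -1"
    by (metis zmult_eq_1_iff)
  with y \<open>d = 1\<close> show ?thesis
    by auto
qed

lemma rat_cube_eq_1_iff [simp]:
  fixes k :: rat
  shows "k^3 = 1 \<longleftrightarrow> k = 1"
proof
  assume "k^3 = 1"
  then have "(k - 1) * ((k + 1/2)^2 + 3/4) = 0"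
    by (simp add: algebra_simps power2_eq_square power3_eq_cube)
  moreover have "(k + 1/2)^2 + 3/4 > 0"
    by (simp add: add_nonneg_pos)
  ultimately show "k = 1"
    by simp
qed simp


section \<open>Linear independence over the rationals\<close>

lemma Q_lin_indepD:
  assumes "Q_lin_indep S" and "finite T" and "T \<subseteq> S"
    and "(\<Sum>x\<in>T. of_rat (c x) * x) = 0" and "x \<in> T"
  shows "c x = 0"
  using assms unfolding Q_lin_indep_def by blast

lemma Q_lin_indep_subset:
  assumes "Q_lin_indep S" and "T \<subseteq> S"
  shows "Q_lin_indep T"
  using assms unfolding Q_lin_indep_def by blast

lemma Q_lin_indep_finiteI:
  assumes "finite S"
    and indep: "\<And>c. (\<Sum>x\<in>S. of_rat (c x) * x) = 0 \<Longrightarrow> \<forall>x\<in>S. c x = 0"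
  shows "Q_lin_indep S"
  unfolding Q_lin_indep_def
proof (intro allI impI ballI)
  fix T c x
  assume "finite T" and "T \<subseteq> S" and sum: "(\<Sum>x\<in>T. of_rat (c x) * x) = 0" and "x \<in> T"
  define c' where "c' y = (if y \<in> T then c y else 0)" for y
  have "(\<Sum>y\<in>S. of_rat (c' y) * y) = (\<Sum>y\<in>T. of_rat (c' y) * y)"
    using \<open>finite S\<close> \<open>T \<subseteq> S\<close> by (intro sum.mono_neutral_right) (auto simp: c'_def)
  also have "\<dots> = 0"
    using sum by (simp add: c'_def)
  finally have "\<forall>y\<in>S. c' y = 0"
    by (rule indep)
  with \<open>T \<subseteq> S\<close> \<open>x \<in> T\<close> have "c' x = 0"
    by blast
  with \<open>x \<in> T\<close> show "c x = 0"
    by (simp add: c'_def)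
qed

lemma Q_lin_indep_image_sign:
  assumes "inj_on f S" and sign: "\<And>x. x \<in> S \<Longrightarrow> f x = x \<or> f x = - x"
    and "Q_lin_indep (f ` S)"
  shows "Q_lin_indep S"
  unfolding Q_lin_indep_def
proof (intro allI impI ballI)
  fix T c x
  assume "finite T" and "T \<subseteq> S" and sum: "(\<Sum>x\<in>T. of_rat (c x) * x) = 0" and "x \<in> T"
  define s where "s y = (if f y = y then 1 else -1 :: rat)" for y
  have s_f: "of_rat (s y) * f y = y" if "y \<in> T" for y
    using sign[of y] that \<open>T \<subseteq> S\<close> by (auto simp: s_def)
  have inj: "inj_on f T"
    using \<open>inj_on f S\<close> \<open>T \<subseteq> S\<close> by (rule inj_on_subset)
  define c' where "c' y = c (the_inv_into T f y) * s (the_inv_into T f y)" for y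
  have c'_f: "c' (f y) = c y * s y" if "y \<in> T" for y
    using inj that by (simp add: c'_def the_inv_into_f_f)
  have "(\<Sum>y\<in>f ` T. of_rat (c' y) * y) = (\<Sum>y\<in>T. of_rat (c y) * (of_rat (s y) * f y))"
    using inj by (simp add: sum.reindex c'_f of_rat_mult mult.assoc)
  also have "\<dots> = (\<Sum>y\<in>T. of_rat (c y) * y)"
    by (intro sum.cong refl) (simp add: s_f)
  finally have "(\<Sum>y\<in>f ` T. of_rat (c' y) * y) = 0"
    using sum by simp
  with \<open>Q_lin_indep (f ` S)\<close> \<open>finite T\<close> \<open>T \<subseteq> S\<close> \<open>x \<in> T\<close> have "c' (f x) = 0"
    by (intro Q_lin_indepD[of "f ` S" "f ` T"]) auto
  with \<open>x \<in> T\<close> show "c x = 0"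
    by (simp add: c'_f s_def split: if_splits)
qed


section \<open>Roots of an irreducible rational cubic\<close>

locale rat_cubic =
  fixes a b c :: rat
  assumes irreducible_cubic: "irreducible [:c, b, a, 1:]"
begin

definition cubic :: "'f::field_char_0 \<Rightarrow> 'f" where
  "cubic x = x^3 + of_rat a * x^2 + of_rat b * x + of_rat c"

lemma poly_map_cubic: "poly (map_poly of_rat [:c, b, a, 1:]) x = cubic x"
  by (simp add: cubic_def algebra_simps power2_eq_square power3_eq_cube)

lemma cubic_of_rat: "cubic (of_rat w) = (of_rat (poly [:c, b, a, 1:] w) :: 'f::field_char_0)"
  by (simp add: cubic_def hom_distribs algebra_simps power2_eq_square power3_eq_cube)

lemma cubic_of_rat_neq_0 [simp]: "cubic (of_rat w :: 'f::field_char_0) \<noteq> 0"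
  using irreducible_cubic root_imp_reducible_poly[of "[:c, b, a, 1:]" w]
  by (auto simp: cubic_of_rat)

lemma cubic_affine_shift:
  "cubic (of_rat p + of_rat k * x) - of_rat k ^ 3 * cubic x
    = poly (map_poly of_rat [:p^3 + a*p^2 + b*p + c - k^3*c, 3*p^2*k + 2*a*p*k + b*k - b*k^3,
        3*p*k^2 + a*k^2 - a*k^3:]) x"
  by (simp add: cubic_def hom_distribs algebra_simps eval_nat_numeral)

lemma cubic_affine_identity:
  fixes t :: "'f::field_char_0"
  assumes "cubic t = 0" and "cubic (of_rat p + of_rat k * t) = 0"
  shows "cubic (of_rat p + of_rat k * x) = of_rat k ^ 3 * cubic x"
proof -
  let ?h = "[:p^3 + a*p^2 + b*p + c - k^3*c, 3*p^2*k + 2*a*p*k + b*k - b*k^3,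
    3*p*k^2 + a*k^2 - a*k^3:]"
  have "[:c, b, a, 1:] dvd ?h"
    using irreducible_cubic
  proof (rule irreducible_dvd_of_common_root)
    show "poly (map_poly of_rat [:c, b, a, 1:]) t = 0"
      using assms(1) by (simp only: poly_map_cubic)
    show "poly (map_poly of_rat ?h) t = 0"
      using assms cubic_affine_shift[of p k t] by simp
  qed
  moreover have "degree ?h < degree [:c, b, a, 1:]"
    by (simp add: degree_pCons_le le_less_trans)
  ultimately have "?h = 0"
    using dvd_imp_degree_le leD by blast
  then show ?thesis
    using cubic_affine_shift[of p k x] by simp
qed

text \<open>
  Unless k = 1 the affine map has the rational fixed point p / (1 - k), which is not a root;
  for k = 1 the second difference of the translation-invariant cubic at 0 is 6 p.
\<close>
lemma cubic_affine_invariant_imp_id: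
  assumes "\<And>x::real. cubic (of_rat p + of_rat k * x) = of_rat k ^ 3 * cubic x"
  shows "k = 1" and "p = 0"
proof -
  show "k = 1"
  proof (rule ccontr)
    assume "k \<noteq> 1"
    define x0 where "x0 = p / (1 - k)"
    have "p + k * x0 = x0"
      using \<open>k \<noteq> 1\<close> by (simp add: x0_def field_simps)
    then have "of_rat p + of_rat k * of_rat x0 = (of_rat x0 :: real)"
      by (metis of_rat_add of_rat_mult)
    with assms[of "of_rat x0"] have "(1 - of_rat (k ^ 3)) * cubic (of_rat x0 :: real) = 0"
      by (simp add: algebra_simps of_rat_power)
    with \<open>k \<noteq> 1\<close> show False
      by simp
  qed
  with assms have translate: "cubic (of_rat p + x) = cubic x" for x :: real
    by simp
  have "6 * (of_rat p :: real)
      = cubic (of_rat p + 1) - cubic 1 + (cubic (of_rat p + - 1) - cubic (- 1))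
      - 2 * (cubic (of_rat p + 0) - cubic 0)"
    by (simp add: cubic_def algebra_simps power2_eq_square power3_eq_cube)
  also have "\<dots> = 0"
    by (simp only: translate) simp
  finally show "p = 0"
    by simp
qed

lemma cubic_root_rat_affine_image:
  assumes "cubic t = 0" and "cubic (of_rat p + of_rat k * t) = 0"
  shows "of_rat p + of_rat k * t = t"
  using cubic_affine_invariant_imp_id[OF cubic_affine_identity[OF assms]] by simp

lemma cubic_root_rat_comb_eq_0:
  assumes "cubic t = 0" and "of_rat e0 + of_rat e1 * t = 0"
  shows "e0 = 0 \<and> e1 = 0"
proof -
  have "e1 = 0"
  proof (rule ccontr)
    assume "e1 \<noteq> 0"
    from assms(2) have "of_rat e1 * t = - of_rat e0"
      by (metis add_eq_0_iff)
    with \<open>e1 \<noteq> 0\<close> have "t = of_rat (- e0 / e1)"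
      by (simp add: hom_distribs field_simps)
    with assms(1) show False
      by simp
  qed
  with assms(2) show ?thesis
    by simp
qed

lemma cubic_roots_rat_comb_eq_0:
  assumes "cubic t1 = 0" and "cubic t2 = 0" and "t1 \<noteq> t2"
    and "of_rat e0 + of_rat e1 * t1 + of_rat e2 * t2 = 0"
  shows "e0 = 0 \<and> e1 = 0 \<and> e2 = 0"
proof -
  have "e2 = 0"
  proof (rule ccontr)
    assume "e2 \<noteq> 0"
    from assms(4) have "of_rat e2 * t2 = - (of_rat e0 + of_rat e1 * t1)"
      by (metis add_eq_0_iff)
    with \<open>e2 \<noteq> 0\<close> have "t2 = of_rat (- e0 / e2) + of_rat (- e1 / e2) * t1"
      by (simp add: hom_distribs field_simps)
    with assms(1-3) show False
      using cubic_root_rat_affine_image[of t1 "- e0 / e2" "- e1 / e2"] by simp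
  qed
  with assms(1,4) show ?thesis
    using cubic_root_rat_comb_eq_0[of t1 e0 e1] by simp
qed

lemma cubic_roots_sum:
  assumes "cubic t1 = 0" and "cubic t2 = 0" and "cubic t3 = 0"
    and "t1 \<noteq> t2" and "t2 \<noteq> t3" and "t1 \<noteq> t3"
  shows "t1 + t2 + t3 = - of_rat a"
proof -
  have diff: "cubic x - cubic y = (x - y) * (x^2 + x*y + y^2 + of_rat a * (x + y) + of_rat b)"
    for x y
    by (simp add: cubic_def algebra_simps power2_eq_square power3_eq_cube)
  have "(t2 - t3) * (t1 + t2 + t3 + of_rat a)
      = (t1^2 + t1*t2 + t2^2 + of_rat a * (t1 + t2) + of_rat b)
        - (t1^2 + t1*t3 + t3^2 + of_rat a * (t1 + t3) + of_rat b)"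
    by (simp add: algebra_simps power2_eq_square)
  also have "\<dots> = 0"
    using diff[of t1 t2] diff[of t1 t3] assms by simp
  finally have "(t2 - t3) * (t1 + t2 + t3 + of_rat a) = 0" .
  with assms(5) show ?thesis
    by (simp add: eq_neg_iff_add_eq_0)
qed

lemma cubic_three_roots_rat_comb_eq_0:
  assumes "a \<noteq> 0" and "cubic t1 = 0" and "cubic t2 = 0" and "cubic t3 = 0"
    and "t1 \<noteq> t2" and "t2 \<noteq> t3" and "t1 \<noteq> t3"
    and "of_rat e1 * t1 + of_rat e2 * t2 + of_rat e3 * t3 = 0"
  shows "e1 = 0 \<and> e2 = 0 \<and> e3 = 0"
proof -
  have "t3 = - of_rat a - t1 - t2"
    using cubic_roots_sum[OF assms(2-7)] by (simp add: algebra_simps)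
  with assms(8) have "of_rat (- a * e3) + of_rat (e1 - e3) * t1 + of_rat (e2 - e3) * t2 = 0"
    by (simp add: hom_distribs algebra_simps)
  with assms(2,3,5) have "- a * e3 = 0 \<and> e1 - e3 = 0 \<and> e2 - e3 = 0"
    by (rule cubic_roots_rat_comb_eq_0)
  with assms(1) show ?thesis
    by simp
qed

lemma finite_cubic_roots: "finite {t :: 'f::field_char_0. cubic t = 0}"
  using poly_roots_finite[of "map_poly of_rat [:c, b, a, 1:] :: 'f poly"]
  unfolding poly_map_cubic by simp

lemma card_cubic_roots_le_3: "card {t :: 'f::field_char_0. cubic t = 0} \<le> 3"
  using card_poly_roots_bound[of "map_poly of_rat [:c, b, a, 1:] :: 'f poly"]
  unfolding poly_map_cubic by simp

lemma cubic_1_neq_0 [simp]: "cubic (1 :: 'f::field_char_0) \<noteq> 0"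
  using cubic_of_rat_neq_0[of 1] by simp

lemma Q_lin_indep_insert_1_cubic_roots:
  assumes roots: "U \<subseteq> {t::real. cubic t = 0}" and "card U \<le> 2"
  shows "Q_lin_indep (insert 1 U)"
proof -
  have "finite U"
    using roots finite_cubic_roots by (rule finite_subset)
  have "1 \<notin> U"
    using roots by auto
  consider "U = {}" | t where "U = {t}" | t1 t2 where "U = {t1, t2}" and "t1 \<noteq> t2"
  proof -
    from \<open>card U \<le> 2\<close> consider "card U = 0" | "card U = 1" | "card U = 2"
      by linarith
    then show thesis
      using that \<open>finite U\<close> by cases (auto simp: card_1_singleton_iff card_2_iff)
  qed
  note U_cases = this
  show ?thesis
  proof (rule Q_lin_indep_finiteI)
    show "finite (insert 1 U)"
      using \<open>finite U\<close> by simp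
    fix e
    assume "(\<Sum>x\<in>insert 1 U. of_rat (e x) * x) = 0"
    with \<open>finite U\<close> \<open>1 \<notin> U\<close> have sum: "of_rat (e 1) + (\<Sum>x\<in>U. of_rat (e x) * x) = 0"
      by simp
    from U_cases show "\<forall>x\<in>insert 1 U. e x = 0"
    proof cases
      case 1
      with sum show ?thesis
        by simp
    next
      case (2 t)
      with sum roots show ?thesis
        using cubic_root_rat_comb_eq_0[of t "e 1" "e t"] by simp
    next
      case (3 t1 t2)
      with sum roots show ?thesis
        using cubic_roots_rat_comb_eq_0[of t1 t2 "e 1" "e t1" "e t2"] by (simp add: add.assoc)
    qed
  qed
qed

lemma Q_lin_indep_cubic_roots:
  assumes "a \<noteq> 0"
  shows "Q_lin_indep {t::real. cubic t = 0}" (is "Q_lin_indep ?R")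
proof (cases "card ?R \<le> 2")
  case True
  then have "Q_lin_indep (insert 1 ?R)"
    by (intro Q_lin_indep_insert_1_cubic_roots) auto
  then show ?thesis
    by (rule Q_lin_indep_subset) auto
next
  case False
  with card_cubic_roots_le_3[where 'f = real] have "card ?R = 3"
    by (simp add: not_le)
  then obtain t1 t2 t3 where R: "?R = {t1, t2, t3}" and "t1 \<noteq> t2" "t2 \<noteq> t3" "t1 \<noteq> t3"
    by (auto simp: card_3_iff)
  show ?thesis
  proof (rule Q_lin_indep_finiteI)
    fix e
    assume "(\<Sum>x\<in>?R. of_rat (e x) * x) = 0"
    with R \<open>t1 \<noteq> t2\<close> \<open>t2 \<noteq> t3\<close> \<open>t1 \<noteq> t3\<close>
    have "of_rat (e t1) * t1 + of_rat (e t2) * t2 + of_rat (e t3) * t3 = 0"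
      by (simp add: add.assoc)
    moreover have "cubic t1 = 0" "cubic t2 = 0" "cubic t3 = 0"
      using R by blast+
    ultimately show "\<forall>x\<in>?R. e x = 0"
      using cubic_three_roots_rat_comb_eq_0[OF assms] R \<open>t1 \<noteq> t2\<close> \<open>t2 \<noteq> t3\<close> \<open>t1 \<noteq> t3\<close>
      by simp
  qed (rule finite_cubic_roots)
qed

lemma Q_lin_indep_Diff_signed_cubic_roots:
  assumes "a \<noteq> 0"
    and S: "S \<subseteq> {x::real. 0 < x \<and> (x = 1 \<or> cubic x = 0 \<or> cubic (- x) = 0)}"
    and "e \<in> S"
  shows "Q_lin_indep (S - {e})"
proof -
  let ?R = "{t::real. cubic t = 0}"
  define f where "f x = (if x = 1 \<or> cubic x = 0 then x else - x)" for x :: real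
  have f_abs: "\<bar>f x\<bar> = x" if "x \<in> S" for x
  proof -
    from S that have "0 < x"
      by blast
    then show ?thesis
      by (simp add: f_def)
  qed
  have f_root: "f x \<in> ?R" if "x \<in> S" and "x \<noteq> 1" for x
  proof -
    from S that have "cubic x = 0 \<or> cubic (- x) = 0"
      by blast
    with \<open>x \<noteq> 1\<close> show ?thesis
      by (auto simp: f_def)
  qed
  have "inj_on f S"
    by (rule inj_onI) (metis f_abs)
  have "Q_lin_indep (f ` (S - {e}))"
  proof (cases "e \<noteq> 1 \<and> 1 \<in> S")
    case True
    with f_root \<open>e \<in> S\<close> have "f e \<in> ?R"
      by blast
    with card_cubic_roots_le_3[where 'f = real] finite_cubic_roots[where 'f = real]
    have "card (?R - {f e}) \<le> 2"
      by (simp add: card_Diff_singleton)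
    then have "Q_lin_indep (insert 1 (?R - {f e}))"
      by (intro Q_lin_indep_insert_1_cubic_roots) auto
    moreover have "f ` (S - {e}) \<subseteq> insert 1 (?R - {f e})"
    proof
      fix y
      assume "y \<in> f ` (S - {e})"
      then obtain x where "x \<in> S" and "x \<noteq> e" and y: "y = f x"
        by auto
      with \<open>inj_on f S\<close> \<open>e \<in> S\<close> have "f x \<noteq> f e"
        by (meson inj_on_contraD)
      with f_root \<open>x \<in> S\<close> y show "y \<in> insert 1 (?R - {f e})"
        by (cases "x = 1") (auto simp: f_def)
    qed
    ultimately show ?thesis
      by (rule Q_lin_indep_subset)
  next
    case False
    with f_root have "f ` (S - {e}) \<subseteq> ?R"
      by auto
    with Q_lin_indep_cubic_roots[OF \<open>a \<noteq> 0\<close>] show ?thesis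
      by (rule Q_lin_indep_subset)
  qed
  moreover have "inj_on f (S - {e})"
    using \<open>inj_on f S\<close> by (rule inj_on_subset) auto
  ultimately show ?thesis
    by (rule Q_lin_indep_image_sign[rotated 2]) (simp add: f_def)
qed

end


section \<open>The polynomial q and its factorisations\<close>

definition q_cubic :: "nat \<Rightarrow> nat \<Rightarrow> rat poly" where
  "q_cubic l m = [:-1, of_nat (l*m + l + m + 3), - of_nat (l + m + 3), 1:]"

lemma poly_q_poly_eq_q_cubic:
  "poly (map_poly of_rat (q_poly l m)) z = poly (map_poly of_rat (q_cubic l m)) (z^2)"
  by (simp add: q_poly_def q_cubic_def hom_distribs algebra_simps eval_nat_numeral)

lemma q_cubic_no_rat_root:
  assumes "l \<ge> 1" and "m \<ge> 1"
  shows "poly (q_cubic l m) y \<noteq> 0"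
proof
  assume root: "poly (q_cubic l m) y = 0"
  then have "y^3 + of_int (- int (l + m + 3)) * y^2 + of_int (int (l*m + l + m + 3)) * y - 1 = 0"
    by (simp add: q_cubic_def algebra_simps power2_eq_square power3_eq_cube)
  then have "y = 1 \<or> y = -1"
    by (rule rat_root_monic_int_cubic)
  moreover have "poly (q_cubic l m) 1 = of_nat (l * m)"
    by (simp add: q_cubic_def)
  moreover have "poly (q_cubic l m) (-1) = - of_nat (l*m + 2*l + 2*m + 8)"
    by (simp add: q_cubic_def)
  ultimately show False
    using root assms by (auto simp del: of_nat_add of_nat_mult)
qed

lemma q_cubic_irreducible:
  assumes "l \<ge> 1" and "m \<ge> 1"
  shows "irreducible (q_cubic l m)"
proof (rule irreducible_if_degree_le_3_no_root)
  show "poly (q_cubic l m) x \<noteq> 0" for x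
    using assms by (rule q_cubic_no_rat_root)
qed (simp_all add: q_cubic_def)

lemma graeffe3_factor_eq_smult_q_cubic:
  assumes "l \<ge> 1" and "m \<ge> 1"
    and "f dvd q_poly l m" and "0 < degree f" and "degree f \<le> 3"
  obtains w where "graeffe3 f = Polynomial.smult w (q_cubic l m)"
proof -
  have "\<not> constant (poly (map_poly (of_rat :: rat \<Rightarrow> complex) f))"
    using \<open>0 < degree f\<close> by (simp add: constant_degree)
  then obtain z :: complex where "poly (map_poly of_rat f) z = 0"
    using fundamental_theorem_of_algebra by blast
  moreover have "map_poly of_rat f dvd map_poly (of_rat :: rat \<Rightarrow> complex) (q_poly l m)"
    using \<open>f dvd q_poly l m\<close> by (rule of_rat_poly_hom.hom_dvd)
  ultimately have "poly (map_poly of_rat (q_cubic l m)) (z^2) = 0"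
    by (metis poly_q_poly_eq_q_cubic dvdE mult_zero_left poly_mult)
  moreover have "poly (map_poly of_rat (graeffe3 f)) (z^2) = 0"
  proof -
    have "map_poly of_rat (graeffe3 f) = graeffe3 (map_poly (of_rat :: rat \<Rightarrow> complex) f)"
      by (simp add: graeffe3_def hom_distribs)
    with \<open>poly (map_poly of_rat f) z = 0\<close> \<open>degree f \<le> 3\<close> show ?thesis
      by (simp add: poly_graeffe3)
  qed
  ultimately have "q_cubic l m dvd graeffe3 f"
    by (intro irreducible_dvd_of_common_root[OF q_cubic_irreducible[OF assms(1,2)]])
  moreover have "graeffe3 f \<noteq> 0"
    using \<open>0 < degree f\<close> \<open>degree f \<le> 3\<close> graeffe3_eq_0_iff by force
  moreover have "degree (graeffe3 f) \<le> degree (q_cubic l m)"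
    by (simp add: graeffe3_def q_cubic_def degree_pCons_le)
  ultimately show ?thesis
    using that by (rule dvd_degree_le_imp_smult)
qed

lemma q_poly_reducible_factor_coeffs:
  assumes "l \<ge> 1" and "m \<ge> 1" and "\<not> irreducible (q_poly l m)"
  obtains a b c :: rat
  where "c^2 = 1" and "2*a*c - b^2 = - of_nat (l*m + l + m + 3)"
    and "a^2 - 2*b = of_nat (l + m + 3)"
proof -
  have "degree (q_poly l m) = 6"
    by (simp add: q_poly_def)
  with assms(3) obtain f where f: "f dvd q_poly l m" "0 < degree f" "degree f \<le> 3"
    by (auto elim: exists_factor_of_half_degree)
  with assms(1,2) obtain w where "graeffe3 f = Polynomial.smult w (q_cubic l m)"
    by (rule graeffe3_factor_eq_smult_q_cubic)
  moreover from f have "f \<noteq> 0"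
    by auto
  ultimately show ?thesis
    using f(3) that unfolding q_cubic_def by (metis graeffe3_eq_smult_cubic_coeffs)
qed

lemma poly_q_poly:
  "poly (map_poly of_rat (q_poly l m)) z
    = z^6 - of_nat (l + m + 3) * z^4 + of_nat (l*m + l + m + 3) * z^2 - (1 :: 'a::field_char_0)"
  by (simp add: q_poly_def hom_distribs algebra_simps eval_nat_numeral)

lemma poly_q_poly_eq_cubic_product:
  fixes z :: "'a::field_char_0"
  assumes "c^2 = 1" and "2*a*c - b^2 = - of_nat (l*m + l + m + 3)"
    and "a^2 - 2*b = of_nat (l + m + 3)"
  shows "poly (map_poly of_rat (q_poly l m)) z
    = - ((z^3 + of_rat a * z^2 + of_rat b * z + of_rat c)
         * ((- z)^3 + of_rat a * (- z)^2 + of_rat b * (- z) + of_rat c))"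
proof -
  from assms(2) have rel: "of_nat (l*m + l + m + 3) = b^2 - 2 * a * c"
    by linarith
  have "(of_rat c)^2 = (1 :: 'a)"
    using arg_cong[OF assms(1), of "of_rat :: rat \<Rightarrow> 'a"] by (simp add: of_rat_power)
  moreover have "of_nat (l*m + l + m + 3) = (of_rat b)^2 - 2 * of_rat a * (of_rat c :: 'a)"
    using arg_cong[OF rel, of "of_rat :: rat \<Rightarrow> 'a"] by (simp add: hom_distribs)
  moreover have "of_nat (l + m + 3) = (of_rat a)^2 - 2 * (of_rat b :: 'a)"
    using arg_cong[OF assms(3), of "of_rat :: rat \<Rightarrow> 'a"] by (simp add: hom_distribs)
  moreover have "- ((z^3 + of_rat a * z^2 + of_rat b * z + of_rat c)
         * ((- z)^3 + of_rat a * (- z)^2 + of_rat b * (- z) + of_rat c))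
      = z^6 - ((of_rat a)^2 - 2 * of_rat b) * z^4 + ((of_rat b)^2 - 2 * of_rat a * of_rat c) * z^2
        - (of_rat c)^2"
    by (simp add: algebra_simps eval_nat_numeral)
  ultimately show ?thesis
    by (simp only: poly_q_poly)
qed

lemma q_poly_factor_quadratic_coeff_neq_0:
  fixes a b c :: rat
  assumes "l \<ge> 1" and "m \<ge> 1"
    and "2*a*c - b^2 = - of_nat (l*m + l + m + 3)" and "a^2 - 2*b = of_nat (l + m + 3)"
  shows "a \<noteq> 0"
proof
  assume "a = 0"
  define L M where "L = (of_nat l :: rat)" and "M = (of_nat m :: rat)"
  from assms(4) \<open>a = 0\<close> have "L + M + 3 = - 2 * b"
    by (simp add: L_def M_def)
  then have "(L + M + 3)^2 = 4 * b^2"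
    by (simp add: power2_eq_square)
  also from assms(3) \<open>a = 0\<close> have "b^2 = L * M + L + M + 3"
    by (simp add: L_def M_def)
  finally have "(L - M)^2 + 2 * L + 2 * M - 3 = 0"
    by (simp add: power2_eq_square algebra_simps)
  moreover have "(L - M)^2 \<ge> 0" and "L \<ge> 1" and "M \<ge> 1"
    using assms(1,2) by (simp_all add: L_def M_def)
  ultimately show False
    by linarith
qed

lemma q_poly_factor_irreducible:
  fixes a b c :: rat
  assumes "l \<ge> 1" and "m \<ge> 1"
    and "c^2 = 1" and "2*a*c - b^2 = - of_nat (l*m + l + m + 3)"
    and "a^2 - 2*b = of_nat (l + m + 3)"
  shows "irreducible [:c, b, a, 1:]"
proof (rule irreducible_if_degree_le_3_no_root)
  fix w
  have "poly (q_cubic l m) (w^2) \<noteq> 0"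
    using assms(1,2) by (rule q_cubic_no_rat_root)
  then have "w^3 + a * w^2 + b * w + c \<noteq> 0"
    using poly_q_poly_eq_cubic_product[OF assms(3-5), of w] poly_q_poly_eq_q_cubic[of l m w] by auto
  then show "poly [:c, b, a, 1:] w \<noteq> 0"
    by (simp add: algebra_simps power2_eq_square power3_eq_cube)
qed simp_all


section \<open>Eigenvalues of the double subdivided star\<close>

definition dss_neighbours :: "nat \<Rightarrow> nat \<Rightarrow> nat \<Rightarrow> nat set" where
  "dss_neighbours l m i = {j \<in> {..<dss_num_vertices l m}. dss_adj l m i j}"

lemma dss_neighbours_0: "dss_neighbours l m 0 = insert 1 ((\<lambda>k. 2 + 2*k) ` {..<l})"
  unfolding dss_neighbours_def dss_adj_def dss_edge_def dss_num_vertices_def by auto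

lemma dss_neighbours_1: "dss_neighbours l m 1 = insert 0 ((\<lambda>k. 2 + 2*l + 2*k) ` {..<m})"
  unfolding dss_neighbours_def dss_adj_def dss_edge_def dss_num_vertices_def by auto

lemma dss_neighbours_left_mid: "k < l \<Longrightarrow> dss_neighbours l m (2 + 2*k) = {0, 3 + 2*k}"
  unfolding dss_neighbours_def dss_adj_def dss_edge_def dss_num_vertices_def by auto presburger+

lemma dss_neighbours_left_leaf: "k < l \<Longrightarrow> dss_neighbours l m (3 + 2*k) = {2 + 2*k}"
  unfolding dss_neighbours_def dss_adj_def dss_edge_def dss_num_vertices_def by auto presburger+

lemma dss_neighbours_right_mid: "k < m \<Longrightarrow> dss_neighbours l m (2 + 2*l + 2*k) = {1, 3 + 2*l + 2*k}"
  unfolding dss_neighbours_def dss_adj_def dss_edge_def dss_num_vertices_def by auto presburger+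

lemma dss_neighbours_right_leaf: "k < m \<Longrightarrow> dss_neighbours l m (3 + 2*l + 2*k) = {2 + 2*l + 2*k}"
  unfolding dss_neighbours_def dss_adj_def dss_edge_def dss_num_vertices_def by auto presburger+

lemma dss_vertex_cases:
  "j < dss_num_vertices l m \<Longrightarrow> j = 0 \<or> j = 1 \<or> (\<exists>k<l. j = 2 + 2*k \<or> j = 3 + 2*k)
    \<or> (\<exists>k<m. j = 2 + 2*l + 2*k \<or> j = 3 + 2*l + 2*k)"
  unfolding dss_num_vertices_def by presburger

context
  fixes l m :: nat and v :: "real vec" and x :: real
  assumes v_dim: "v \<in> carrier_vec (dss_num_vertices l m)"
    and v_eigen: "dss_adj_matrix l m *\<^sub>v v = x \<cdot>\<^sub>v v"
begin

lemma dss_eigvec_neighbour_sum: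
  assumes "i < dss_num_vertices l m"
  shows "(\<Sum>j\<in>dss_neighbours l m i. v $ j) = x * v $ i"
proof -
  let ?N = "dss_num_vertices l m"
  have "x * v $ i = (dss_adj_matrix l m *\<^sub>v v) $ i"
    using v_eigen v_dim assms by simp
  also have "\<dots> = (\<Sum>j<?N. (if dss_adj l m i j then 1 else 0) * v $ j)"
    using v_dim assms by (simp add: dss_adj_matrix_def scalar_prod_def lessThan_atLeast0)
  also have "\<dots> = (\<Sum>j<?N. if dss_adj l m i j then v $ j else 0)"
    by (rule sum.cong) auto
  also have "\<dots> = (\<Sum>j\<in>dss_neighbours l m i. v $ j)"
    unfolding dss_neighbours_def by (rule sum.inter_filter[symmetric]) simp
  finally show ?thesis ..
qed

lemma dss_eigvec_left_arm:
  assumes "k < l"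
  shows "v $ (2 + 2*k) = x * v $ (3 + 2*k)" and "v $ 0 = (x^2 - 1) * v $ (3 + 2*k)"
proof -
  from assms have "3 + 2*k < dss_num_vertices l m"
    by (simp add: dss_num_vertices_def)
  then show mid: "v $ (2 + 2*k) = x * v $ (3 + 2*k)"
    using dss_eigvec_neighbour_sum[of "3 + 2*k", unfolded dss_neighbours_left_leaf[OF assms]]
    by simp
  from assms have "2 + 2*k < dss_num_vertices l m"
    by (simp add: dss_num_vertices_def)
  then have "v $ 0 + v $ (3 + 2*k) = x * v $ (2 + 2*k)"
    using dss_eigvec_neighbour_sum[of "2 + 2*k", unfolded dss_neighbours_left_mid[OF assms]]
    by simp
  with mid show "v $ 0 = (x^2 - 1) * v $ (3 + 2*k)"
    by (simp add: algebra_simps power2_eq_square)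
qed

lemma dss_eigvec_right_arm:
  assumes "k < m"
  shows "v $ (2 + 2*l + 2*k) = x * v $ (3 + 2*l + 2*k)"
    and "v $ 1 = (x^2 - 1) * v $ (3 + 2*l + 2*k)"
proof -
  from assms have "3 + 2*l + 2*k < dss_num_vertices l m"
    by (simp add: dss_num_vertices_def)
  then show mid: "v $ (2 + 2*l + 2*k) = x * v $ (3 + 2*l + 2*k)"
    using dss_eigvec_neighbour_sum[of "3 + 2*l + 2*k", unfolded dss_neighbours_right_leaf[OF assms]]
    by simp
  from assms have "2 + 2*l + 2*k < dss_num_vertices l m"
    by (simp add: dss_num_vertices_def)
  then have "v $ 1 + v $ (3 + 2*l + 2*k) = x * v $ (2 + 2*l + 2*k)"
    using dss_eigvec_neighbour_sum[of "2 + 2*l + 2*k", unfolded dss_neighbours_right_mid[OF assms]]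
    by simp
  with mid show "v $ 1 = (x^2 - 1) * v $ (3 + 2*l + 2*k)"
    by (simp add: algebra_simps power2_eq_square)
qed

lemma dss_eigvec_centre_0: "v $ 1 * (x^2 - 1) = x * v $ 0 * (x^2 - 1 - of_nat l)"
proof -
  have arm: "(x^2 - 1) * v $ (2 + 2*k) = x * v $ 0" if "k < l" for k
  proof -
    have "(x^2 - 1) * v $ (2 + 2*k) = x * ((x^2 - 1) * v $ (3 + 2*k))"
      by (simp only: dss_eigvec_left_arm(1)[OF that] mult.left_commute)
    also have "\<dots> = x * v $ 0"
      by (simp only: dss_eigvec_left_arm(2)[OF that])
    finally show ?thesis .
  qed
  have "(x^2 - 1) * (\<Sum>k<l. v $ (2 + 2*k)) = (\<Sum>k<l. x * v $ 0)"
    unfolding sum_distrib_left by (intro sum.cong refl arm) simp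
  then have arms: "(x^2 - 1) * (\<Sum>k<l. v $ (2 + 2*k)) = of_nat l * (x * v $ 0)"
    by simp
  have "v $ 1 + (\<Sum>k<l. v $ (2 + 2*k)) = (\<Sum>j\<in>dss_neighbours l m 0. v $ j)"
    unfolding dss_neighbours_0 by (subst sum.insert) (auto simp: sum.reindex inj_on_def)
  also have "\<dots> = x * v $ 0"
    by (rule dss_eigvec_neighbour_sum) (simp add: dss_num_vertices_def)
  finally have "(x^2 - 1) * v $ 1 + (x^2 - 1) * (\<Sum>k<l. v $ (2 + 2*k))
      = (x^2 - 1) * (x * v $ 0)"
    by (metis distrib_left)
  then show ?thesis
    unfolding arms by (simp add: algebra_simps)
qed

lemma dss_eigvec_centre_1: "v $ 0 * (x^2 - 1) = x * v $ 1 * (x^2 - 1 - of_nat m)"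
proof -
  have arm: "(x^2 - 1) * v $ (2 + 2*l + 2*k) = x * v $ 1" if "k < m" for k
  proof -
    have "(x^2 - 1) * v $ (2 + 2*l + 2*k) = x * ((x^2 - 1) * v $ (3 + 2*l + 2*k))"
      by (simp only: dss_eigvec_right_arm(1)[OF that] mult.left_commute)
    also have "\<dots> = x * v $ 1"
      by (simp only: dss_eigvec_right_arm(2)[OF that])
    finally show ?thesis .
  qed
  have "(x^2 - 1) * (\<Sum>k<m. v $ (2 + 2*l + 2*k)) = (\<Sum>k<m. x * v $ 1)"
    unfolding sum_distrib_left by (intro sum.cong refl arm) simp
  then have arms: "(x^2 - 1) * (\<Sum>k<m. v $ (2 + 2*l + 2*k)) = of_nat m * (x * v $ 1)"
    by simp
  have "v $ 0 + (\<Sum>k<m. v $ (2 + 2*l + 2*k)) = (\<Sum>j\<in>dss_neighbours l m 1. v $ j)"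
    unfolding dss_neighbours_1 by (subst sum.insert) (auto simp: sum.reindex inj_on_def)
  also have "\<dots> = x * v $ 1"
    by (rule dss_eigvec_neighbour_sum) (simp add: dss_num_vertices_def)
  finally have "(x^2 - 1) * v $ 0 + (x^2 - 1) * (\<Sum>k<m. v $ (2 + 2*l + 2*k))
      = (x^2 - 1) * (x * v $ 1)"
    by (metis distrib_left)
  then show ?thesis
    unfolding arms by (simp add: algebra_simps)
qed

lemma dss_eigvec_eq_0_if_centres_0:
  assumes "x^2 \<noteq> 1" and "v $ 0 = 0" and "v $ 1 = 0"
  shows "v = 0\<^sub>v (dss_num_vertices l m)"
proof (rule eq_vecI)
  show "dim_vec v = dim_vec (0\<^sub>v (dss_num_vertices l m))"
    using v_dim by simp
  fix j
  assume "j < dim_vec (0\<^sub>v (dss_num_vertices l m))"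
  then have "j < dss_num_vertices l m"
    by simp
  moreover have "v $ (2 + 2*k) = 0 \<and> v $ (3 + 2*k) = 0" if "k < l" for k
    using dss_eigvec_left_arm[OF that] assms by simp
  moreover have "v $ (2 + 2*l + 2*k) = 0 \<and> v $ (3 + 2*l + 2*k) = 0" if "k < m" for k
    using dss_eigvec_right_arm[OF that] assms by simp
  ultimately show "v $ j = 0\<^sub>v (dss_num_vertices l m) $ j"
    using dss_vertex_cases[of j l m] assms by auto
qed

end

lemma dss_eigenvalue_root:
  assumes "eigenvalue (dss_adj_matrix l m) x"
  shows "x^2 = 1 \<or> poly (map_poly of_rat (q_poly l m)) x = 0"
proof (rule ccontr)
  assume "\<not> ?thesis"
  then have "x^2 \<noteq> 1" and q: "poly (map_poly of_rat (q_poly l m)) x \<noteq> 0"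
    by simp_all
  from assms obtain v where v_dim: "v \<in> carrier_vec (dss_num_vertices l m)"
    and "v \<noteq> 0\<^sub>v (dss_num_vertices l m)" and v_eigen: "dss_adj_matrix l m *\<^sub>v v = x \<cdot>\<^sub>v v"
    unfolding eigenvalue_def eigenvector_def by (auto simp: dss_adj_matrix_def)
  note centres = dss_eigvec_centre_0[OF v_dim v_eigen] dss_eigvec_centre_1[OF v_dim v_eigen]
  define D where "D = x^2 - 1"
  have "v $ 0 * D * D = x * v $ 1 * (D - of_nat m) * D"
    using centres(2) by (simp add: D_def)
  also have "\<dots> = x * (v $ 1 * D) * (D - of_nat m)"
    by (simp add: algebra_simps)
  also have "\<dots> = x * (x * v $ 0 * (D - of_nat l)) * (D - of_nat m)"
    using centres(1) by (simp add: D_def)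
  finally have "v $ 0 * (D * D - x * x * (D - of_nat l) * (D - of_nat m)) = 0"
    by (simp add: algebra_simps)
  moreover have "D * D - x * x * (D - of_nat l) * (D - of_nat m)
      = - poly (map_poly of_rat (q_poly l m)) x"
    by (simp add: D_def poly_q_poly algebra_simps eval_nat_numeral)
  ultimately have "v $ 0 = 0"
    using q by simp
  moreover from this centres(1) \<open>x^2 \<noteq> 1\<close> have "v $ 1 = 0"
    by simp
  ultimately have "v = 0\<^sub>v (dss_num_vertices l m)"
    by (rule dss_eigvec_eq_0_if_centres_0[OF v_dim v_eigen \<open>x^2 \<noteq> 1\<close>])
  with \<open>v \<noteq> 0\<^sub>v (dss_num_vertices l m)\<close> show False ..
qed

theorem theorem2p2:
  fixes l m :: nat
  assumes "l \<ge> 1" and "m \<ge> 1"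
    and "\<not> irreducible (q_poly l m)"
  shows "\<forall>e \<in> {x::real. x > 0 \<and> eigenvalue (dss_adj_matrix l m) x}.
           Q_lin_indep ({x::real. x > 0 \<and> eigenvalue (dss_adj_matrix l m) x} - {e})"
proof
  fix e
  assume e: "e \<in> {x::real. x > 0 \<and> eigenvalue (dss_adj_matrix l m) x}"
  obtain a b c :: rat where rel: "c^2 = 1" "2*a*c - b^2 = - of_nat (l*m + l + m + 3)"
    "a^2 - 2*b = of_nat (l + m + 3)"
    using q_poly_reducible_factor_coeffs[OF assms] .
  interpret rat_cubic a b c
    using q_poly_factor_irreducible[OF assms(1,2) rel] by unfold_locales
  have "a \<noteq> 0"
    using assms(1,2) rel(2,3) by (rule q_poly_factor_quadratic_coeff_neq_0)
  have eigenvalues: "{x::real. x > 0 \<and> eigenvalue (dss_adj_matrix l m) x}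
      \<subseteq> {x. 0 < x \<and> (x = 1 \<or> cubic x = 0 \<or> cubic (- x) = 0)}"
  proof
    fix x
    assume x: "x \<in> {x::real. x > 0 \<and> eigenvalue (dss_adj_matrix l m) x}"
    then have "x^2 = 1 \<or> poly (map_poly of_rat (q_poly l m)) x = 0"
      by (simp add: dss_eigenvalue_root)
    with x show "x \<in> {x. 0 < x \<and> (x = 1 \<or> cubic x = 0 \<or> cubic (- x) = 0)}"
      using poly_q_poly_eq_cubic_product[OF rel, of x] by (auto simp: cubic_def power2_eq_1_iff)
  qed
  show "Q_lin_indep ({x::real. x > 0 \<and> eigenvalue (dss_adj_matrix l m) x} - {e})"
    using \<open>a \<noteq> 0\<close> eigenvalues e by (rule Q_lin_indep_Diff_signed_cubic_roots)
qed

end
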